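(* Fix $0<\alpha<1$, $\lambda>1$, $0<r_0<1$ and $0<\mu<1$. There is a constant $C_3>0$ such that the following holds. Let $s(t)=(s_1(t),s_2(t))$ and $\tilde s(t)=(\tilde s_1(t),\tilde s_2(t))$ be solutions of $$\dot s_1=s_1\Bigl(\tfrac{s_1^2+s_2^2}{r_0}\Bigr)^{\alpha}\log\lambda,\qquad \dot s_2=-s_2\Bigl(\tfrac{s_1^2+s_2^2}{r_0}\Bigr)^{\alpha}\log\lambda$$ where $T>0$ is such that $s(t)$ lies in $D_{r_0/2}=\{s_1^2+s_2^2\le r_0^2/4\}$ for all $t\in[0,T]$ while the trajectory is outside $D_{r_0/2}$ at times $-1$ and $T+1$; let $T_1=T/2$ and $\Delta s_j(t)=\tilde s_j(t)-s_j(t)$. Assume $s_1(t)\neq0\neq s_2(t)$, that $\Delta s_2(t)>0$ and $|\Delta s_1(t)|\le\mu\,\Delta s_2(t)$ for $t\in[0,T]$, and that $\bigl|\frac{\Delta s_2(0)}{s_2(0)}\bigr|<\frac{1-\mu}{72}$. Then for all $T_1<t<T$, $$\Delta s_2(t)<C_3\,\Delta s_2(T_1).$$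
   Context: The system is the slow-down vector field in the region where the slow-down function equals $\psi(u)=(u/r_0)^\alpha$; $\lambda$ is the largest eigenvalue of the toral automorphism being slowed down. The constant $C_3$ is uniform over all such pairs of solutions. *)

theory Defs
  imports "HOL-Analysis.Analysis"
begin

definition slow_rate :: "real \<Rightarrow> real \<Rightarrow> real \<Rightarrow> real \<Rightarrow> real \<Rightarrow> real" where
  "slow_rate r0 \<alpha> lam x y = ((x\<^sup>2 + y\<^sup>2) / r0) powr \<alpha> * ln lam"

definition slow_solution ::
  "real \<Rightarrow> real \<Rightarrow> real \<Rightarrow> (real \<Rightarrow> real) \<Rightarrow> (real \<Rightarrow> real) \<Rightarrow> real set \<Rightarrow> bool" where
  "slow_solution r0 \<alpha> lam s1 s2 I \<longleftrightarrow>
     (\<forall>t\<in>I. (s1 has_real_derivative (s1 t * slow_rate r0 \<alpha> lam (s1 t) (s2 t))) (at t within I)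
          \<and> (s2 has_real_derivative (- s2 t * slow_rate r0 \<alpha> lam (s1 t) (s2 t))) (at t within I))"

end

theory Submission
  imports Defs
begin

text \<open>The theorem holds with \<open>C3 = 2\<close>, because the gap \<open>\<Delta>s\<^sub>2\<close> is nonincreasing on \<open>[0, T]\<close>.
  Indeed \<open>\<Delta>s\<^sub>2' = -(g(s~) - g(s)) ln \<lambda>\<close> with \<open>g(x, y) = y ((x\<^sup>2 + y\<^sup>2) / r\<^sub>0) powr \<alpha>\<close>, and \<open>g\<close> is
  monotone for the cone order \<open>\<bar>x' - x\<bar> \<le> y' - y\<close>, in which \<open>s~\<close> lies above \<open>s\<close> since \<open>\<mu> < 1\<close>.
  In the coordinates \<open>p = y + x\<close>, \<open>q = y - x\<close> the cone order is the componentwise order and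
  \<open>2 g = (p + q) ((p\<^sup>2 + q\<^sup>2) / (2 r\<^sub>0)) powr \<alpha>\<close>, which is symmetric in \<open>p, q\<close> and, as \<open>\<alpha> < 1\<close>,
  nondecreasing in \<open>p\<close>.\<close>

lemma mult_sq_powr_mono:
  fixes c \<alpha> p p' :: real
  assumes "0 < c" "0 < \<alpha>" "p \<le> p'"
  shows "p * (p\<^sup>2 / c) powr \<alpha> \<le> p' * (p'\<^sup>2 / c) powr \<alpha>"
proof (cases "0 \<le> p")
  case True
  have "p\<^sup>2 / c \<le> p'\<^sup>2 / c"
    using True assms by (intro divide_right_mono power_mono) auto
  then have "(p\<^sup>2 / c) powr \<alpha> \<le> (p'\<^sup>2 / c) powr \<alpha>"
    using assms by (intro powr_mono2) auto
  then show ?thesis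
    using True assms(3) by (intro mult_mono) auto
next
  case False
  show ?thesis
  proof (cases "0 \<le> p'")
    case True
    have "p * (p\<^sup>2 / c) powr \<alpha> \<le> 0"
      using False by (intro mult_nonpos_nonneg) auto
    also have "0 \<le> p' * (p'\<^sup>2 / c) powr \<alpha>"
      using True by simp
    finally show ?thesis .
  next
    case p'_neg: False
    have "p'\<^sup>2 / c \<le> p\<^sup>2 / c"
      using power_mono[of "-p'" "-p" 2] p'_neg assms by (intro divide_right_mono) auto
    then have "(p'\<^sup>2 / c) powr \<alpha> \<le> (p\<^sup>2 / c) powr \<alpha>"
      using assms by (intro powr_mono2) auto
    then have "p * (p\<^sup>2 / c) powr \<alpha> \<le> p * (p'\<^sup>2 / c) powr \<alpha>"
      using False by (intro mult_left_mono_neg) auto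
    also have "\<dots> \<le> p' * (p'\<^sup>2 / c) powr \<alpha>"
      using assms(3) by (intro mult_right_mono) auto
    finally show ?thesis .
  qed
qed

lemma sum_sq_add_mult_nonneg:
  fixes \<alpha> x q :: real
  assumes "0 \<le> \<alpha>" "\<alpha> \<le> 1"
  shows "0 \<le> (x\<^sup>2 + q\<^sup>2) + 2 * \<alpha> * x * (x + q)"
proof -
  have "(x\<^sup>2 + q\<^sup>2) + 2 * \<alpha> * x * (x + q) = (1 - \<alpha>) * (x\<^sup>2 + q\<^sup>2) + \<alpha> * ((x + q)\<^sup>2 + 2 * x\<^sup>2)"
    by (simp add: algebra_simps power2_eq_square)
  also have "\<dots> \<ge> 0"
    using assms by (intro add_nonneg_nonneg mult_nonneg_nonneg) auto
  finally show ?thesis .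
qed

lemma has_real_derivative_add_mult_sum_sq_powr:
  fixes c \<alpha> q x :: real
  assumes "0 < c" "0 < x\<^sup>2 + q\<^sup>2"
  shows "((\<lambda>x. (x + q) * ((x\<^sup>2 + q\<^sup>2) / c) powr \<alpha>) has_real_derivative
     ((x\<^sup>2 + q\<^sup>2) / c) powr (\<alpha> - 1) / c * ((x\<^sup>2 + q\<^sup>2) + 2 * \<alpha> * x * (x + q))) (at x)"
proof -
  define v where "v = (x\<^sup>2 + q\<^sup>2) / c"
  have v: "v > 0"
    using assms by (simp add: v_def)
  have "((\<lambda>x. (x + q) * ((x\<^sup>2 + q\<^sup>2) / c) powr \<alpha>) has_real_derivative
      v powr \<alpha> + (x + q) * (\<alpha> * v powr (\<alpha> - 1) * (2 * x / c))) (at x)"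
    using v unfolding v_def by (auto intro!: derivative_eq_intros)
  moreover have "v powr \<alpha> + (x + q) * (\<alpha> * v powr (\<alpha> - 1) * (2 * x / c))
      = v powr (\<alpha> - 1) / c * ((x\<^sup>2 + q\<^sup>2) + 2 * \<alpha> * x * (x + q))"
  proof -
    have "x\<^sup>2 + q\<^sup>2 = c * v"
      using assms(1) by (simp add: v_def)
    then show ?thesis
      using v assms(1) by (simp add: powr_diff field_simps)
  qed
  ultimately show ?thesis
    by (simp add: v_def)
qed

lemma add_mult_sum_sq_powr_mono:
  fixes c \<alpha> p p' q :: real
  assumes "0 < c" "0 < \<alpha>" "\<alpha> < 1" "p \<le> p'"
  shows "(p + q) * ((p\<^sup>2 + q\<^sup>2) / c) powr \<alpha> \<le> (p' + q) * ((p'\<^sup>2 + q\<^sup>2) / c) powr \<alpha>"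
proof (cases "q = 0")
  case True
  then show ?thesis
    using mult_sq_powr_mono[OF assms(1,2,4)] by simp
next
  case False
  show ?thesis
  proof (rule DERIV_nonneg_imp_nondecreasing[OF assms(4)], intro exI conjI)
    fix x
    have "0 < x\<^sup>2 + q\<^sup>2"
      using False by (simp add: add_nonneg_pos)
    then show "((\<lambda>x. (x + q) * ((x\<^sup>2 + q\<^sup>2) / c) powr \<alpha>) has_real_derivative
        ((x\<^sup>2 + q\<^sup>2) / c) powr (\<alpha> - 1) / c * ((x\<^sup>2 + q\<^sup>2) + 2 * \<alpha> * x * (x + q))) (at x)"
      by (rule has_real_derivative_add_mult_sum_sq_powr[OF assms(1)])
    show "0 \<le> ((x\<^sup>2 + q\<^sup>2) / c) powr (\<alpha> - 1) / c * ((x\<^sup>2 + q\<^sup>2) + 2 * \<alpha> * x * (x + q))"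
      using assms sum_sq_add_mult_nonneg[of \<alpha> x q] by simp
  qed
qed

lemma mult_sum_sq_powr_mono_cone:
  fixes r0 \<alpha> x y x' y' :: real
  assumes "0 < r0" "0 < \<alpha>" "\<alpha> < 1" "\<bar>x' - x\<bar> \<le> y' - y"
  shows "y * ((x\<^sup>2 + y\<^sup>2) / r0) powr \<alpha> \<le> y' * ((x'\<^sup>2 + y'\<^sup>2) / r0) powr \<alpha>"
proof -
  let ?G = "\<lambda>p q. (p + q) * ((p\<^sup>2 + q\<^sup>2) / (2 * r0)) powr \<alpha>"
  have G: "2 * (y * ((x\<^sup>2 + y\<^sup>2) / r0) powr \<alpha>) = ?G (y + x) (y - x)" for x y :: real
  proof -
    have "((y + x)\<^sup>2 + (y - x)\<^sup>2) / (2 * r0) = (x\<^sup>2 + y\<^sup>2) / r0"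
      using assms(1) by (simp add: field_simps power2_eq_square)
    then show ?thesis by simp
  qed
  have r0: "0 < 2 * r0"
    using assms(1) by simp
  have "?G (y + x) (y - x) \<le> ?G (y' + x') (y - x)"
    using assms(4) by (intro add_mult_sum_sq_powr_mono[OF r0 assms(2,3)]) auto
  also have "\<dots> = ?G (y - x) (y' + x')"
    by (simp add: add.commute)
  also have "\<dots> \<le> ?G (y' - x') (y' + x')"
    using assms(4) by (intro add_mult_sum_sq_powr_mono[OF r0 assms(2,3)]) auto
  also have "\<dots> = ?G (y' + x') (y' - x')"
    by (simp add: add.commute)
  finally show ?thesis
    unfolding G[symmetric] by simp
qed

lemma mult_slow_rate_mono_cone:
  assumes "0 < r0" "0 < \<alpha>" "\<alpha> < 1" "1 \<le> lam" "\<bar>x' - x\<bar> \<le> y' - y"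
  shows "y * slow_rate r0 \<alpha> lam x y \<le> y' * slow_rate r0 \<alpha> lam x' y'"
  using mult_right_mono[OF mult_sum_sq_powr_mono_cone[OF assms(1,2,3,5)], of "ln lam"] assms(4)
  by (simp add: slow_rate_def mult.assoc)

lemma slow_solution_subset:
  assumes "slow_solution r0 \<alpha> lam s1 s2 J" "I \<subseteq> J"
  shows "slow_solution r0 \<alpha> lam s1 s2 I"
  using assms unfolding slow_solution_def by (blast intro: has_field_derivative_subset)

lemma slow_solution_gap_antimono:
  assumes "0 < r0" "0 < \<alpha>" "\<alpha> < 1" "1 \<le> lam" "a \<le> b"
    and s: "slow_solution r0 \<alpha> lam s1 s2 {a..b}"
    and t: "slow_solution r0 \<alpha> lam t1 t2 {a..b}"
    and cone: "\<And>x. x \<in> {a..b} \<Longrightarrow> \<bar>t1 x - s1 x\<bar> \<le> t2 x - s2 x"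
  shows "t2 b - s2 b \<le> t2 a - s2 a"
proof (rule DERIV_nonpos_imp_decreasing_open[OF \<open>a \<le> b\<close>])
  let ?ds2 = "\<lambda>x. - s2 x * slow_rate r0 \<alpha> lam (s1 x) (s2 x)"
  let ?dt2 = "\<lambda>x. - t2 x * slow_rate r0 \<alpha> lam (t1 x) (t2 x)"
  have deriv: "((\<lambda>x. t2 x - s2 x) has_real_derivative ?dt2 x - ?ds2 x) (at x within {a..b})"
    if "x \<in> {a..b}" for x
    using s t that unfolding slow_solution_def by (blast intro: derivative_intros)
  then show "continuous_on {a..b} (\<lambda>x. t2 x - s2 x)"
    by (meson DERIV_continuous continuous_on_eq_continuous_within)
  fix x
  assume "a < x" "x < b"
  then have "((\<lambda>x. t2 x - s2 x) has_real_derivative ?dt2 x - ?ds2 x) (at x)"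
    using deriv[of x] at_within_Icc_at[of a x b] by simp
  moreover have "?dt2 x - ?ds2 x \<le> 0"
    using mult_slow_rate_mono_cone[OF assms(1-4) cone, of x] \<open>a < x\<close> \<open>x < b\<close> by simp
  ultimately show "\<exists>y. ((\<lambda>x. t2 x - s2 x) has_real_derivative y) (at x) \<and> y \<le> 0"
    by blast
qed

theorem lemma6p5:
  fixes \<alpha> lam r0 \<mu> :: real
  assumes "0 < \<alpha>" "\<alpha> < 1" "1 < lam" "0 < r0" "r0 < 1" "0 < \<mu>" "\<mu> < 1"
  shows "\<exists>C3 > 0. \<forall>(T::real) (s1::real\<Rightarrow>real) s2 (t1::real\<Rightarrow>real) t2.
     T > 0 \<longrightarrow>
     slow_solution r0 \<alpha> lam s1 s2 {-1..T+1} \<longrightarrow>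
     slow_solution r0 \<alpha> lam t1 t2 {0..T} \<longrightarrow>
     (\<forall>t\<in>{0..T}. (s1 t)\<^sup>2 + (s2 t)\<^sup>2 \<le> r0\<^sup>2 / 4) \<longrightarrow>
     (s1 (-1))\<^sup>2 + (s2 (-1))\<^sup>2 > r0\<^sup>2 / 4 \<longrightarrow>
     (s1 (T+1))\<^sup>2 + (s2 (T+1))\<^sup>2 > r0\<^sup>2 / 4 \<longrightarrow>
     (\<forall>t\<in>{0..T}. s1 t \<noteq> 0 \<and> s2 t \<noteq> 0) \<longrightarrow>
     (\<forall>t\<in>{0..T}. t2 t - s2 t > 0 \<and> \<bar>t1 t - s1 t\<bar> \<le> \<mu> * (t2 t - s2 t)) \<longrightarrow>
     \<bar>(t2 0 - s2 0) / s2 0\<bar> < (1 - \<mu>) / 72 \<longrightarrow>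
     (\<forall>t. T/2 < t \<and> t < T \<longrightarrow> t2 t - s2 t < C3 * (t2 (T/2) - s2 (T/2)))"
proof (rule exI[of _ 2], intro conjI allI impI)
  fix T :: real and s1 s2 t1 t2 :: "real \<Rightarrow> real" and t
  assume "T > 0"
    and s: "slow_solution r0 \<alpha> lam s1 s2 {-1..T+1}"
    and t: "slow_solution r0 \<alpha> lam t1 t2 {0..T}"
    and gap: "\<forall>t\<in>{0..T}. t2 t - s2 t > 0 \<and> \<bar>t1 t - s1 t\<bar> \<le> \<mu> * (t2 t - s2 t)"
    and "T/2 < t \<and> t < T"
  then have sub: "{T/2..t} \<subseteq> {0..T}"
    by auto
  have cone: "\<bar>t1 x - s1 x\<bar> \<le> t2 x - s2 x" if "x \<in> {T/2..t}" for x
  proof -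
    have "0 < t2 x - s2 x" "\<bar>t1 x - s1 x\<bar> \<le> \<mu> * (t2 x - s2 x)"
      using gap sub that by auto
    then show ?thesis
      using mult_left_le_one_le[of "t2 x - s2 x" \<mu>] assms(6,7) by linarith
  qed
  have "t2 t - s2 t \<le> t2 (T/2) - s2 (T/2)"
  proof (rule slow_solution_gap_antimono[OF assms(4,1,2)])
    show "slow_solution r0 \<alpha> lam s1 s2 {T/2..t}" "slow_solution r0 \<alpha> lam t1 t2 {T/2..t}"
      using sub \<open>T > 0\<close> by (auto intro: slow_solution_subset[OF s] slow_solution_subset[OF t])
  qed (use \<open>T/2 < t \<and> t < T\<close> cone \<open>1 < lam\<close> in auto)
  moreover have "t2 (T/2) - s2 (T/2) > 0"
    using gap \<open>T > 0\<close> by auto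
  ultimately show "t2 t - s2 t < 2 * (t2 (T/2) - s2 (T/2))"
    by (simp add: algebra_simps)
qed simp

end
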